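(* Let $S$ be a list of sequences (indexed from $0$), and let $\rho(S[i],S[j])$ denote the length of the maximal common prefix of the sequences at indices $i$ and $j$. Define the overlap of $S[j]$ with respect to $S$ as $\mathcal{O}_S(j) := \max_{i<j} \rho(S[i],S[j])$ and the overlap of $S$ as $\mathcal{O}(S) := \sum_{j>0} \mathcal{O}_S(j)$. Let $L$ be the lexicographically ordered permutation of $S$. Then \[ \mathcal{O}(S) = \mathcal{O}(L) = \sum_{j>0} \rho(L[j-1],L[j]). \]
   Context: Setting: batch processing of shortest path queries in a road network. For each query, shortcut chains (sequences of vertices in a shortcut graph, oriented from the hub vertex to a query endpoint) are computed and then unpacked into paths; when unpacking a chain, the unpacked common prefix with a previously unpacked chain can be copied instead of recomputed. The overlap $\mathcal{O}(S)$ measures the amount of unpacking work saved for a given processing order of the list of chains $S$. *)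

theory Defs
  imports Main "HOL-Library.List_Lexorder"
begin

fun rho :: "'a list \<Rightarrow> 'a list \<Rightarrow> nat" where
  "rho (x # xs) (y # ys) = (if x = y then Suc (rho xs ys) else 0)"
| "rho _ _ = 0"

text \<open>Overlap of S[j] with respect to S: max over i < j of rho (S!i) (S!j)
  (only used for 0 < j < length S, where the index set is nonempty).\<close>
definition overlap_at :: "'a list list \<Rightarrow> nat \<Rightarrow> nat" where
  "overlap_at S j = Max {rho (S ! i) (S ! j) | i. i < j}"

definition overlap :: "'a list list \<Rightarrow> nat" where
  "overlap S = (\<Sum>j\<in>{1..<length S}. overlap_at S j)"

end

theory Submission
  imports Defs "HOL-Library.Multiset"
begin

text \<open>Insert the chains one after another into a trie. The chain \<open>S ! j\<close> shares exactly
  \<open>overlap_at S j\<close> nodes with the trie built from its predecessors, so it adds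
  \<open>length (S ! j) - overlap_at S j\<close> new nodes. Hence \<open>overlap S\<close> is the total length of the
  chains minus the number of nodes of the final trie, and both quantities are independent of
  the order of the chains. For the sorted order the maximum in \<open>overlap_at\<close> is attained at
  the immediate predecessor, because \<open>rho a c \<le> rho b c\<close> whenever \<open>a \<le> b \<le> c\<close>
  lexicographically.\<close>

lemma rho_le_length: "rho xs ys \<le> length xs" "rho xs ys \<le> length ys"
  by (induction xs ys rule: rho.induct) auto

lemma take_eq_take_iff_le_rho:
  "k \<le> length xs \<Longrightarrow> k \<le> length ys \<Longrightarrow> take k xs = take k ys \<longleftrightarrow> k \<le> rho xs ys"
proof (induction xs ys arbitrary: k rule: rho.induct)
  case (1 x xs y ys)
  then show ?case by (cases k) auto
qed auto

lemma rho_antimono_lex: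
  fixes a b c :: "'a::linorder list"
  assumes "a \<le> b" "b \<le> c"
  shows "rho a c \<le> rho b c"
  using assms
proof (induction c arbitrary: a b)
  case (Cons z c)
  show ?case
  proof (cases a)
    case (Cons x a')
    with Cons.prems obtain y b' where b: "b = y # b'"
      by (cases b) auto
    show ?thesis
    proof (cases "x = z")
      case True
      with Cons.prems \<open>a = x # a'\<close> b have "y = x" "a' \<le> b'" "b' \<le> c"
        by auto
      with Cons.IH[of a' b'] True \<open>a = x # a'\<close> b show ?thesis by simp
    qed (simp add: \<open>a = x # a'\<close>)
  qed simp
qed simp

definition nonempty_prefixes :: "'a list \<Rightarrow> 'a list set" where
  "nonempty_prefixes xs = (\<lambda>k. take k xs) ` {1..length xs}"

text \<open>A trie node is identified with the nonempty prefix it spells; the root is not counted.\<close>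
definition trie_nodes :: "'a list list \<Rightarrow> 'a list set" where
  "trie_nodes S = \<Union> (nonempty_prefixes ` set S)"

definition overlap_with :: "'a list list \<Rightarrow> 'a list \<Rightarrow> nat" where
  "overlap_with S x = Max (insert 0 ((\<lambda>y. rho y x) ` set S))"

lemma finite_nonempty_prefixes: "finite (nonempty_prefixes xs)"
  by (simp add: nonempty_prefixes_def)

lemma finite_trie_nodes: "finite (trie_nodes S)"
  by (simp add: trie_nodes_def finite_nonempty_prefixes)

lemma card_take_image:
  assumes "m \<le> length xs"
  shows "card ((\<lambda>k. take k xs) ` {1..m}) = m"
proof -
  have "inj_on (\<lambda>k. take k xs) {1..m}"
  proof (rule inj_onI)
    fix k l assume "k \<in> {1..m}" "l \<in> {1..m}" "take k xs = take l xs"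
    then have "length (take k xs) = length (take l xs)" by simp
    with \<open>k \<in> {1..m}\<close> \<open>l \<in> {1..m}\<close> assms show "k = l" by simp
  qed
  then show ?thesis by (simp add: card_image)
qed

lemma card_nonempty_prefixes: "card (nonempty_prefixes xs) = length xs"
  unfolding nonempty_prefixes_def by (rule card_take_image) simp

lemma nonempty_prefixes_Int:
  "nonempty_prefixes x \<inter> nonempty_prefixes y = (\<lambda>k. take k x) ` {1..rho y x}"
proof (intro equalityI subsetI)
  fix p assume "p \<in> nonempty_prefixes x \<inter> nonempty_prefixes y"
  then obtain k m where k: "1 \<le> k" "k \<le> length x" "p = take k x"
    and m: "m \<le> length y" "p = take m y"
    by (auto simp: nonempty_prefixes_def)
  have "m = k"
    using k m by (metis length_take min_absorb2)
  with k m have "k \<le> rho y x"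
    using take_eq_take_iff_le_rho[of k y x] by simp
  with k show "p \<in> (\<lambda>k. take k x) ` {1..rho y x}" by auto
next
  fix p assume "p \<in> (\<lambda>k. take k x) ` {1..rho y x}"
  then obtain k where k: "1 \<le> k" "k \<le> rho y x" "p = take k x" by auto
  then have "k \<le> length x" "k \<le> length y"
    using rho_le_length[of y x] by simp_all
  with k have "p = take k y"
    using take_eq_take_iff_le_rho[of k y x] by simp
  with k \<open>k \<le> length x\<close> \<open>k \<le> length y\<close>
  show "p \<in> nonempty_prefixes x \<inter> nonempty_prefixes y"
    unfolding nonempty_prefixes_def by (auto intro: image_eqI[where x = k])
qed

lemma UN_atLeastAtMost_1:
  fixes f :: "'a \<Rightarrow> nat"
  assumes "finite A"
  shows "(\<Union>a\<in>A. {1..f a}) = {1..Max (insert 0 (f ` A))}"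
  using assms
  by (auto simp: Max_ge_iff)

lemma nonempty_prefixes_Int_trie_nodes:
  "nonempty_prefixes x \<inter> trie_nodes S = (\<lambda>k. take k x) ` {1..overlap_with S x}"
proof -
  have "nonempty_prefixes x \<inter> trie_nodes S
      = (\<Union>y\<in>set S. nonempty_prefixes x \<inter> nonempty_prefixes y)"
    unfolding trie_nodes_def by (rule Int_UN_distrib)
  also have "\<dots> = (\<lambda>k. take k x) ` (\<Union>y\<in>set S. {1..rho y x})"
    by (simp add: nonempty_prefixes_Int image_UN)
  also have "\<dots> = (\<lambda>k. take k x) ` {1..overlap_with S x}"
    unfolding overlap_with_def by (subst UN_atLeastAtMost_1) simp_all
  finally show ?thesis .
qed

lemma overlap_with_le_length: "overlap_with S x \<le> length x"
  by (simp add: overlap_with_def rho_le_length)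

lemma card_nonempty_prefixes_Int_trie_nodes:
  "card (nonempty_prefixes x \<inter> trie_nodes S) = overlap_with S x"
  unfolding nonempty_prefixes_Int_trie_nodes by (rule card_take_image[OF overlap_with_le_length])

lemma overlap_at_eq_overlap_with:
  assumes "0 < j" "j < length S"
  shows "overlap_at S j = overlap_with (take j S) (S ! j)"
proof -
  have "{rho (S ! i) (S ! j) | i. i < j} = (\<lambda>y. rho y (S ! j)) ` set (take j S)"
    using assms by (force simp: set_conv_nth nth_take)
  moreover have "set (take j S) \<noteq> {}"
    using assms by (auto simp: take_eq_Nil)
  ultimately show ?thesis
    by (simp add: overlap_at_def overlap_with_def Max_insert)
qed

lemma overlap_snoc: "overlap (S @ [x]) = overlap S + overlap_with S x"
proof (cases "S = []")
  case True
  then show ?thesis by (simp add: overlap_def overlap_with_def)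
next
  case False
  have "overlap_at (S @ [x]) j = overlap_at S j" if "0 < j" "j < length S" for j
    using that by (simp add: overlap_at_eq_overlap_with nth_append)
  then have "(\<Sum>j\<in>{1..<length S}. overlap_at (S @ [x]) j) = overlap S"
    unfolding overlap_def by (intro sum.cong) auto
  moreover have "overlap_at (S @ [x]) (length S) = overlap_with S x"
    using False by (simp add: overlap_at_eq_overlap_with)
  moreover have "{1..<length (S @ [x])} = insert (length S) {1..<length S}"
    using False by (auto simp: Suc_le_eq)
  ultimately show ?thesis
    by (simp add: overlap_def)
qed

lemma overlap_add_card_trie_nodes:
  "overlap S + card (trie_nodes S) = sum_list (map length S)"
proof (induction S rule: rev_induct)
  case Nil
  then show ?case by (simp add: overlap_def trie_nodes_def)
next
  case (snoc x S)
  have "trie_nodes (S @ [x]) = nonempty_prefixes x \<union> trie_nodes S"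
    by (auto simp: trie_nodes_def)
  then have "card (trie_nodes (S @ [x])) + overlap_with S x = length x + card (trie_nodes S)"
    using card_Un_Int[OF finite_nonempty_prefixes[of x] finite_trie_nodes[of S]]
    by (simp add: card_nonempty_prefixes card_nonempty_prefixes_Int_trie_nodes)
  with snoc.IH show ?case
    by (simp add: overlap_snoc)
qed

lemma overlap_mset_eq:
  assumes "mset S = mset T"
  shows "overlap S = overlap T"
proof -
  have "trie_nodes S = trie_nodes T"
    using assms by (simp add: trie_nodes_def flip: set_mset_mset)
  moreover have "sum_list (map length S) = sum_list (map length T)"
    using assms by (metis mset_map sum_mset_sum_list)
  ultimately show ?thesis
    using overlap_add_card_trie_nodes[of S] overlap_add_card_trie_nodes[of T] by simp
qed

lemma overlap_at_sorted:
  fixes L :: "'a::linorder list list"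
  assumes "sorted L" "0 < j" "j < length L"
  shows "overlap_at L j = rho (L ! (j - 1)) (L ! j)"
  unfolding overlap_at_def
proof (rule Max_eqI)
  show "finite {rho (L ! i) (L ! j) | i. i < j}"
    by (simp add: setcompr_eq_image)
  show "rho (L ! (j - 1)) (L ! j) \<in> {rho (L ! i) (L ! j) | i. i < j}"
    using assms by auto
next
  fix r assume "r \<in> {rho (L ! i) (L ! j) | i. i < j}"
  then obtain i where "i < j" "r = rho (L ! i) (L ! j)" by auto
  moreover have "L ! i \<le> L ! (j - 1)" "L ! (j - 1) \<le> L ! j"
    using assms \<open>i < j\<close> by (auto simp: sorted_iff_nth_mono)
  ultimately show "r \<le> rho (L ! (j - 1)) (L ! j)"
    using rho_antimono_lex by blast
qed

theorem theorem8p1: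
  fixes S :: "('a::linorder) list list"
  defines "L \<equiv> sort S"
  shows "overlap S = overlap L \<and>
         overlap L = (\<Sum>j\<in>{1..<length L}. rho (L ! (j - 1)) (L ! j))"
proof
  show "overlap S = overlap L"
    unfolding L_def by (rule overlap_mset_eq) simp
  have "sorted L"
    by (simp add: L_def)
  then show "overlap L = (\<Sum>j\<in>{1..<length L}. rho (L ! (j - 1)) (L ! j))"
    unfolding overlap_def by (intro sum.cong) (auto simp: overlap_at_sorted)
qed

end
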